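(* Let $k\ge1$ and let $\Sigma_k=\{(f,g)\in P_k\times P_k: f\le g\}$. Define $r(f,g)=(f,f)$, $s(f,g)=(g,g)$, $(f,g)(g,h)=(f,h)$, and $d(f,g)=h(g)-h(f)$. Then $d$ takes values in $\mathbb{N}^k$, and with these structure maps $(\Sigma_k,d)$ is a $k$-graph; moreover $d$ maps $\Sigma_k$ onto $\{n\in\mathbb{N}^k: n\le\mathbf{1}_k\}$.
   Context: A function $f:\{0,\dots,k\}\to\{0,\dots,k\}$ is a $k$-placing if $f(j)=|\{i: f(i)<f(j)\}|$ for all $j\le k$; $P_k$ is the set of $k$-placings, ordered by $f\le g$ iff $f(i)\le g(i)$ for all $i$. The height function $h:P_k\to\mathbb{N}^k$ is given by $h(f)_i=1$ if $f^{-1}(i)\neq\emptyset$ and $h(f)_i=0$ otherwise, for $1\le i\le k$. $\mathbf{1}_k=(1,\dots,1)\in\mathbb{N}^k$. A $k$-graph is a countable small category with a functor $d$ to $\mathbb{N}^k$ such that, writing $\Lambda^n=d^{-1}(n)$, composition is a bijection from composable pairs in $\Lambda^m\times\Lambda^n$ onto $\Lambda^{m+n}$. *)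

theory Defs
  imports Main "HOL-Library.Countable_Set"
begin

text \<open>Elements of N^k are represented as functions nat => nat supported on {1..k}
  (coordinate i is the value at i, for 1 <= i <= k).\<close>
definition nvec :: "nat \<Rightarrow> (nat \<Rightarrow> nat) \<Rightarrow> bool" where
  "nvec k n \<longleftrightarrow> (\<forall>i. (i < 1 \<or> k < i) \<longrightarrow> n i = 0)"

text \<open>k-placings: functions {0..k} -> {0..k}, represented extensionally
  (value 0 outside {0..k}).\<close>
definition placing :: "nat \<Rightarrow> (nat \<Rightarrow> nat) \<Rightarrow> bool" where
  "placing k f \<longleftrightarrow>
     (\<forall>j\<le>k. f j \<le> k \<and> f j = card {i. i \<le> k \<and> f i < f j}) \<and> (\<forall>j>k. f j = 0)"

definition Pk :: "nat \<Rightarrow> (nat \<Rightarrow> nat) set" where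
  "Pk k = {f. placing k f}"

definition ple :: "nat \<Rightarrow> (nat \<Rightarrow> nat) \<Rightarrow> (nat \<Rightarrow> nat) \<Rightarrow> bool" where
  "ple k f g \<longleftrightarrow> (\<forall>i\<le>k. f i \<le> g i)"

definition height :: "nat \<Rightarrow> (nat \<Rightarrow> nat) \<Rightarrow> nat \<Rightarrow> nat" where
  "height k f i = (if 1 \<le> i \<and> i \<le> k \<and> (\<exists>j\<le>k. f j = i) then 1 else 0)"

definition Sigma_k :: "nat \<Rightarrow> ((nat \<Rightarrow> nat) \<times> (nat \<Rightarrow> nat)) set" where
  "Sigma_k k = {(f, g). f \<in> Pk k \<and> g \<in> Pk k \<and> ple k f g}"

definition sig_r :: "('a \<times> 'a) \<Rightarrow> ('a \<times> 'a)" where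
  "sig_r a = (fst a, fst a)"

definition sig_s :: "('a \<times> 'a) \<Rightarrow> ('a \<times> 'a)" where
  "sig_s a = (snd a, snd a)"

text \<open>Composition (f,g)(g,h) = (f,h); only used on composable pairs.\<close>
definition sig_comp :: "('a \<times> 'a) \<Rightarrow> ('a \<times> 'a) \<Rightarrow> ('a \<times> 'a)" where
  "sig_comp a b = (fst a, snd b)"

text \<open>d(f,g) = h(g) - h(f) (natural subtraction; the theorem separately asserts
  that h(f) <= h(g) componentwise, so no truncation occurs).\<close>
definition sig_d :: "nat \<Rightarrow> ((nat \<Rightarrow> nat) \<times> (nat \<Rightarrow> nat)) \<Rightarrow> nat \<Rightarrow> nat" where
  "sig_d k a = (\<lambda>i. height k (snd a) i - height k (fst a) i)"

text \<open>A small category given by its set of morphisms M, with range r, source s,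
  composition cmp (cmp a b defined when s a = r b); objects are identified with
  identity morphisms.\<close>
definition is_category ::
  "'m set \<Rightarrow> ('m \<Rightarrow> 'm) \<Rightarrow> ('m \<Rightarrow> 'm) \<Rightarrow> ('m \<Rightarrow> 'm \<Rightarrow> 'm) \<Rightarrow> bool" where
  "is_category M r s cmp \<longleftrightarrow>
     (\<forall>a\<in>M. r a \<in> M \<and> s a \<in> M \<and>
        r (r a) = r a \<and> s (r a) = r a \<and> r (s a) = s a \<and> s (s a) = s a \<and>
        cmp (r a) a = a \<and> cmp a (s a) = a) \<and>
     (\<forall>a\<in>M. \<forall>b\<in>M. s a = r b \<longrightarrow>
        cmp a b \<in> M \<and> r (cmp a b) = r a \<and> s (cmp a b) = s b) \<and>
     (\<forall>a\<in>M. \<forall>b\<in>M. \<forall>c\<in>M. s a = r b \<and> s b = r c \<longrightarrow>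
        cmp (cmp a b) c = cmp a (cmp b c))"

definition is_k_graph ::
  "nat \<Rightarrow> 'm set \<Rightarrow> ('m \<Rightarrow> 'm) \<Rightarrow> ('m \<Rightarrow> 'm) \<Rightarrow> ('m \<Rightarrow> 'm \<Rightarrow> 'm)
     \<Rightarrow> ('m \<Rightarrow> nat \<Rightarrow> nat) \<Rightarrow> bool" where
  "is_k_graph k M r s cmp d \<longleftrightarrow>
     countable M \<and> is_category M r s cmp \<and>
     (\<forall>a\<in>M. nvec k (d a)) \<and>
     (\<forall>a\<in>M. r a = a \<longrightarrow> d a = (\<lambda>i. 0)) \<and>
     (\<forall>a\<in>M. \<forall>b\<in>M. s a = r b \<longrightarrow> d (cmp a b) = (\<lambda>i. d a i + d b i)) \<and>
     (\<forall>m n. nvec k m \<longrightarrow> nvec k n \<longrightarrow>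
        (\<forall>l\<in>M. d l = (\<lambda>i. m i + n i) \<longrightarrow>
           (\<exists>!p. fst p \<in> M \<and> snd p \<in> M \<and> s (fst p) = r (snd p) \<and>
                 d (fst p) = m \<and> d (snd p) = n \<and> cmp (fst p) (snd p) = l)))"

end

theory Submission imports Defs begin

text \<open>A placing \<open>f \<le> g\<close> has the same lower sets as \<open>g\<close> at each of its values, so its image
  is a subset of the image of \<open>g\<close>; conversely every subset \<open>S\<close> of the image of \<open>g\<close> containing
  \<open>0\<close> is the image of exactly one placing below \<open>g\<close>, namely \<open>g\<close> rounded down to \<open>S\<close>. Since the
  image of a placing always contains \<open>0\<close>, it is recorded exactly by the height, so the placings
  between \<open>f\<close> and \<open>g\<close> correspond bijectively to the vectors between \<open>h(f)\<close> and \<open>h(g)\<close>. This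
  gives both the unique factorisation property of \<open>\<Sigma>\<^sub>k\<close> and the range of \<open>d\<close>.\<close>

lemma nvec_eq_0: "nvec k n \<Longrightarrow> i < 1 \<or> k < i \<Longrightarrow> n i = 0"
  unfolding nvec_def by (erule allE, erule mp)

lemma placing_le_k: "placing k f \<Longrightarrow> j \<le> k \<Longrightarrow> f j \<le> k"
  by (simp add: placing_def)

lemma placing_card: "placing k f \<Longrightarrow> j \<le> k \<Longrightarrow> card {i. i \<le> k \<and> f i < f j} = f j"
  by (simp add: placing_def)

lemma placing_eq_0: "placing k f \<Longrightarrow> k < j \<Longrightarrow> f j = 0"
  by (simp add: placing_def)

lemma placingI:
  assumes "\<And>j. j \<le> k \<Longrightarrow> f j \<le> k"
    and "\<And>j. j \<le> k \<Longrightarrow> card {i. i \<le> k \<and> f i < f j} = f j"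
    and "\<And>j. k < j \<Longrightarrow> f j = 0"
  shows "placing k f"
  using assms by (simp add: placing_def)

lemma placing_zero: "placing k (\<lambda>_. 0)"
  by (rule placingI) auto

lemma placing_id: "placing k (\<lambda>j. if j \<le> k then j else 0)"
proof (rule placingI)
  fix j assume "j \<le> k"
  then have "{i. i \<le> k \<and> (if i \<le> k then i else 0) < j} = {..<j}" by auto
  then show "card {i. i \<le> k \<and> (if i \<le> k then i else 0) < (if j \<le> k then j else 0)}
      = (if j \<le> k then j else 0)"
    using \<open>j \<le> k\<close> by simp
qed auto

lemma finite_Pk: "finite (Pk k)"
proof -
  have "Pk k \<subseteq> {f. \<forall>x. (x \<in> {..k} \<longrightarrow> f x \<in> {..k}) \<and> (x \<notin> {..k} \<longrightarrow> f x = 0)}"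
    by (auto simp: Pk_def placing_le_k placing_eq_0)
  then show ?thesis
    using finite_set_of_finite_funs[of "{..k}" "{..k}" 0] finite_subset by blast
qed

lemma zero_in_placing_image:
  assumes "placing k f" shows "0 \<in> f ` {..k}"
proof -
  obtain j where j: "j \<le> k" "f j = Min (f ` {..k})"
    using Min_in[of "f ` {..k}"] by fastforce
  then have "{i. i \<le> k \<and> f i < f j} = {}" by (auto simp: not_less)
  then have "f j = 0" using placing_card[OF assms \<open>j \<le> k\<close>] by (metis card.empty)
  then show ?thesis using j(1) by force
qed

lemma placing_le_lower_set:
  assumes pf: "placing k f" and pg: "placing k g" and le: "ple k f g" and j: "j \<le> k"
  shows "f j \<in> g ` {..k}" and "{i. i \<le> k \<and> g i < f j} = {i. i \<le> k \<and> f i < f j}"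
proof -
  define S where "S = {i. i \<le> k \<and> f i < f j}"
  define T where "T = {i. i \<le> k \<and> f j \<le> f i}"
  \<comment> \<open>the least \<open>g\<close>-value \<open>w\<close> on \<open>T\<close> is squeezed between \<open>f j\<close> and \<open>card S = f j\<close>\<close>
  have fin: "finite (g ` T)" and ne: "g ` T \<noteq> {}" using j by (auto simp: T_def)
  obtain j' where j': "j' \<in> T" "g j' = Min (g ` T)"
    using Min_in[OF fin ne] by auto
  then have j'_min: "\<forall>i\<in>T. g j' \<le> g i"
    using fin by simp
  define w where "w = g j'"
  have j'k: "j' \<le> k" using j' by (simp add: T_def)
  have sub: "{i. i \<le> k \<and> g i < w} \<subseteq> S"
    using j'_min by (auto simp: S_def T_def w_def not_le)
  have card_w: "card {i. i \<le> k \<and> g i < w} = w"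
    using placing_card[OF pg j'k] by (simp add: w_def)
  have "w \<le> f j"
    using card_mono[OF _ sub] card_w placing_card[OF pf j] by (simp add: S_def)
  moreover have "f j \<le> w"
    using j'(1) le j'k unfolding T_def ple_def w_def by (blast intro: order_trans)
  ultimately have w: "w = f j" by simp
  show "f j \<in> g ` {..k}" using j'k w unfolding w_def by (metis atMost_iff image_eqI)
  have "{i. i \<le> k \<and> g i < w} = S"
    using card_subset_eq[OF _ sub] card_w placing_card[OF pf j] w by (simp add: S_def)
  then show "{i. i \<le> k \<and> g i < f j} = {i. i \<le> k \<and> f i < f j}" by (simp add: S_def w)
qed

lemma placing_image_mono:
  "placing k f \<Longrightarrow> placing k g \<Longrightarrow> ple k f g \<Longrightarrow> f ` {..k} \<subseteq> g ` {..k}"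
  using placing_le_lower_set(1) by blast

lemma placing_round_down:
  assumes pg: "placing k g" and "0 \<in> S" and S_sub: "S \<subseteq> g ` {..k}"
  obtains h where "placing k h" "ple k h g" "h ` {..k} = S"
    "\<And>i v. i \<le> k \<Longrightarrow> v \<in> S \<Longrightarrow> v \<le> g i \<Longrightarrow> v \<le> h i"
proof
  define h where "h i = (if i \<le> k then Max {v\<in>S. v \<le> g i} else 0)" for i
  have fin: "finite S" using S_sub finite_subset by blast
  have hS: "h i \<in> S" "h i \<le> g i" if "i \<le> k" for i
  proof -
    have "Max {v\<in>S. v \<le> g i} \<in> {v\<in>S. v \<le> g i}"
      using fin \<open>0 \<in> S\<close> by (intro Max_in) auto
    then show "h i \<in> S" "h i \<le> g i" using that by (simp_all add: h_def)
  qed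
  show ge: "v \<le> h i" if "i \<le> k" "v \<in> S" "v \<le> g i" for i v
    using fin that by (simp add: h_def)
  have less_iff: "h i < v \<longleftrightarrow> g i < v" if "i \<le> k" "v \<in> S" for i v
    using hS ge that by (meson le_less_trans not_le)
  show "placing k h"
  proof (rule placingI)
    fix j assume j: "j \<le> k"
    show "h j \<le> k" using hS[OF j] placing_le_k[OF pg j] by simp
    obtain j0 where j0: "j0 \<le> k" "g j0 = h j" using hS(1)[OF j] S_sub by auto
    have "{i. i \<le> k \<and> h i < h j} = {i. i \<le> k \<and> g i < g j0}"
      using less_iff hS(1)[OF j] j0(2) by auto
    then show "card {i. i \<le> k \<and> h i < h j} = h j"
      using placing_card[OF pg j0(1)] j0(2) by simp
  qed (simp add: h_def)
  show "ple k h g" using hS by (simp add: ple_def)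
  show "h ` {..k} = S"
  proof
    show "h ` {..k} \<subseteq> S" using hS by auto
    show "S \<subseteq> h ` {..k}"
    proof
      fix v assume v: "v \<in> S"
      then obtain j where j: "j \<le> k" "g j = v" using S_sub by auto
      then have "h j = v" using hS[OF j(1)] ge[OF j(1) v] by simp
      then show "v \<in> h ` {..k}" using j(1) by auto
    qed
  qed
qed

lemma placing_below_eq_if_image_eq:
  assumes p1: "placing k h1" and p2: "placing k h2" and pg: "placing k g"
    and l1: "ple k h1 g" and l2: "ple k h2 g" and im: "h1 ` {..k} = h2 ` {..k}"
  shows "h1 = h2"
proof -
  have not_less: "\<not> h i < h' i"
    if ph: "placing k h" and hg: "ple k h g" and h'g: "ple k h' g"
      and im: "h ` {..k} = h' ` {..k}" and i: "i \<le> k" for h h' i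
  proof
    assume lt: "h i < h' i"
    have "h' i \<in> h ` {..k}" using im i by simp
    then obtain j where j: "j \<le> k" "h j = h' i" by auto
    \<comment> \<open>\<open>i\<close> lies in the lower set of \<open>h\<close> at \<open>h j\<close>, hence in that of \<open>g\<close>\<close>
    have "i \<in> {x. x \<le> k \<and> h x < h j}" using lt i j(2) by simp
    then have "g i < h j" using placing_le_lower_set(2)[OF ph pg hg j(1)] by blast
    then have "g i < h' i" using j(2) by simp
    moreover have "h' i \<le> g i" using h'g i by (simp add: ple_def)
    ultimately show False by simp
  qed
  show ?thesis
  proof
    fix i show "h1 i = h2 i"
    proof (cases "i \<le> k")
      case True
      then show ?thesis
        using not_less[OF p1 l1 l2 im True] not_less[OF p2 l2 l1 im[symmetric] True] by linarith
    next
      case False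
      then show ?thesis using placing_eq_0[OF p1] placing_eq_0[OF p2] by simp
    qed
  qed
qed

lemma height_eq: "height k f i = (if 1 \<le> i \<and> i \<le> k \<and> i \<in> f ` {..k} then 1 else 0)"
  by (auto simp: height_def)

lemma height_eq_0: "\<not> (1 \<le> i \<and> i \<le> k) \<Longrightarrow> height k f i = 0"
  unfolding height_def by (rule if_not_P) blast

lemma height_zero: "height k (\<lambda>_. 0) = (\<lambda>_. 0)"
  by (simp add: fun_eq_iff height_def)

lemma height_le_1: "height k f i \<le> 1"
  by (simp add: height_def)

lemma placing_image_eq_height:
  assumes "placing k f" shows "f ` {..k} = insert 0 {i. height k f i = 1}"
proof
  show "f ` {..k} \<subseteq> insert 0 {i. height k f i = 1}"
  proof
    fix v assume v: "v \<in> f ` {..k}"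
    then have "v \<le> k" using placing_le_k[OF assms] by auto
    then show "v \<in> insert 0 {i. height k f i = 1}"
      using v by (cases "v = 0") (simp_all add: height_eq)
  qed
  show "insert 0 {i. height k f i = 1} \<subseteq> f ` {..k}"
    using zero_in_placing_image[OF assms] by (auto simp: height_def split: if_splits)
qed

lemma height_mono:
  "placing k f \<Longrightarrow> placing k g \<Longrightarrow> ple k f g \<Longrightarrow> height k f i \<le> height k g i"
  using placing_image_mono[of k f g] by (auto simp: height_eq)

lemma placing_below_eq_if_height_eq:
  "placing k h1 \<Longrightarrow> placing k h2 \<Longrightarrow> placing k g \<Longrightarrow> ple k h1 g \<Longrightarrow> ple k h2 g \<Longrightarrow>
    height k h1 = height k h2 \<Longrightarrow> h1 = h2"
  by (metis placing_below_eq_if_image_eq placing_image_eq_height)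

lemma exists_placing_between:
  assumes pf: "placing k f" and pg: "placing k g" and fg: "ple k f g"
    and x: "\<And>i. height k f i \<le> x i" "\<And>i. x i \<le> height k g i"
  obtains h where "placing k h" "ple k f h" "ple k h g" "height k h = x"
proof -
  define S where "S = insert 0 {i. x i = 1}"
  have x01: "x i = 1 \<longleftrightarrow> x i \<noteq> 0" for i
    using x(2)[of i] height_le_1[of k g i] by linarith
  have "height k g i = 1" if "x i = 1" for i
    using x(2)[of i] height_le_1[of k g i] that by simp
  then have S_sub: "S \<subseteq> g ` {..k}" by (auto simp: S_def placing_image_eq_height[OF pg])
  have S0: "0 \<in> S" by (simp add: S_def)
  obtain h where h: "placing k h" "ple k h g" "h ` {..k} = S"
    and ge: "\<And>i v. i \<le> k \<Longrightarrow> v \<in> S \<Longrightarrow> v \<le> g i \<Longrightarrow> v \<le> h i"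
    using placing_round_down[OF pg S0 S_sub] by blast
  have "x i = 1" if "height k f i = 1" for i
    using x(1)[of i] x01[of i] that by simp
  then have fS: "f ` {..k} \<subseteq> S" by (auto simp: S_def placing_image_eq_height[OF pf])
  have fh: "ple k f h"
    unfolding ple_def
  proof (intro allI impI)
    fix i assume "i \<le> k"
    moreover have "f i \<in> S" using fS \<open>i \<le> k\<close> by auto
    moreover have "f i \<le> g i" using fg \<open>i \<le> k\<close> by (simp add: ple_def)
    ultimately show "f i \<le> h i" by (rule ge)
  qed
  have hx: "height k h = x"
  proof
    fix i
    show "height k h i = x i"
    proof (cases "1 \<le> i \<and> i \<le> k")
      case True
      then have "height k h i = (if x i = 1 then 1 else 0)" by (simp add: height_eq h(3) S_def)
      then show ?thesis using x01[of i] by presburger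
    next
      case False
      then show ?thesis using x(2)[of i] by (simp add: height_eq_0)
    qed
  qed
  show ?thesis by (rule that[OF h(1) fh h(2) hx])
qed

lemma mem_Sigma_k_iff: "(f, g) \<in> Sigma_k k \<longleftrightarrow> placing k f \<and> placing k g \<and> ple k f g"
  by (simp add: Sigma_k_def Pk_def)

lemma Sigma_k_height_mono: "(f, g) \<in> Sigma_k k \<Longrightarrow> height k f i \<le> height k g i"
  by (simp add: mem_Sigma_k_iff height_mono)

lemma countable_Sigma_k: "countable (Sigma_k k)"
proof -
  have "Sigma_k k \<subseteq> Pk k \<times> Pk k" by (auto simp: Sigma_k_def)
  then have "finite (Sigma_k k)" by (rule finite_subset) (simp add: finite_Pk)
  then show ?thesis by (rule countable_finite)
qed

lemma is_category_Sigma_k: "is_category (Sigma_k k) sig_r sig_s sig_comp"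
  unfolding is_category_def
proof (intro conjI ballI impI)
  fix a assume "a \<in> Sigma_k k"
  then obtain f g where a: "a = (f, g)" "placing k f" "placing k g"
    by (cases a) (auto simp: mem_Sigma_k_iff)
  then show "sig_r a \<in> Sigma_k k" "sig_s a \<in> Sigma_k k"
    by (simp_all add: sig_r_def sig_s_def mem_Sigma_k_iff ple_def)
  show "sig_r (sig_r a) = sig_r a" "sig_s (sig_r a) = sig_r a" "sig_r (sig_s a) = sig_s a"
    "sig_s (sig_s a) = sig_s a" "sig_comp (sig_r a) a = a" "sig_comp a (sig_s a) = a"
    by (simp_all add: a sig_r_def sig_s_def sig_comp_def)
next
  fix a b assume ab: "a \<in> Sigma_k k" "b \<in> Sigma_k k" "sig_s a = sig_r b"
  obtain f h g where a: "a = (f, h)" and b: "b = (h, g)"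
    using ab(3) by (cases a, cases b) (simp add: sig_s_def sig_r_def)
  have "ple k f h" "ple k h g" "placing k f" "placing k g"
    using ab(1,2) by (simp_all add: a b mem_Sigma_k_iff)
  then have "(f, g) \<in> Sigma_k k"
    unfolding mem_Sigma_k_iff ple_def by (meson order_trans)
  then show "sig_comp a b \<in> Sigma_k k" "sig_r (sig_comp a b) = sig_r a"
    "sig_s (sig_comp a b) = sig_s b"
    by (simp_all add: a b sig_comp_def sig_r_def sig_s_def)
qed (simp add: sig_comp_def)

lemma sig_d_comp:
  assumes "(f, h) \<in> Sigma_k k" "(h, g) \<in> Sigma_k k"
  shows "sig_d k (f, g) = (\<lambda>i. sig_d k (f, h) i + sig_d k (h, g) i)"
  using Sigma_k_height_mono[OF assms(1)] Sigma_k_height_mono[OF assms(2)]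
  by (auto simp: sig_d_def fun_eq_iff)

lemma Sigma_k_unique_factorisation:
  assumes l: "(f, g) \<in> Sigma_k k" and d: "sig_d k (f, g) = (\<lambda>i. m i + n i)"
  shows "\<exists>!h. (f, h) \<in> Sigma_k k \<and> (h, g) \<in> Sigma_k k \<and> sig_d k (f, h) = m \<and> sig_d k (h, g) = n"
proof -
  have pf: "placing k f" and pg: "placing k g" and fg: "ple k f g"
    using l by (auto simp: mem_Sigma_k_iff)
  have hg: "height k g i = height k f i + m i + n i" for i
    using fun_cong[OF d, of i] Sigma_k_height_mono[OF l, of i] by (simp add: sig_d_def)
  let ?L = "\<lambda>h. (f, h) \<in> Sigma_k k \<and> (h, g) \<in> Sigma_k k \<and> sig_d k (f, h) = m \<and> sig_d k (h, g) = n"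
  let ?R = "\<lambda>h. placing k h \<and> ple k f h \<and> ple k h g \<and> height k h = (\<lambda>i. height k f i + m i)"
  \<comment> \<open>by monotonicity of heights, the conditions on \<open>h\<close> say exactly \<open>h(h) = h(f) + m\<close>\<close>
  have iff: "?L h \<longleftrightarrow> ?R h" for h
  proof
    assume fhg: "?L h"
    then have ph: "placing k h" and fh: "ple k f h" and hg': "ple k h g"
      and dfh: "sig_d k (f, h) = m"
      by (auto simp: mem_Sigma_k_iff)
    have "height k h i = height k f i + m i" for i
      using fun_cong[OF dfh, of i] height_mono[OF pf ph fh, of i] by (simp add: sig_d_def)
    then show "?R h" using ph fh hg' by auto
  next
    assume "?R h"
    then show "?L h" using pf pg hg by (auto simp: mem_Sigma_k_iff sig_d_def fun_eq_iff)
  qed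
  have "height k f i + m i \<le> height k g i" for i using hg[of i] by simp
  then obtain h where h: "?R h"
    using exists_placing_between[OF pf pg fg, of "\<lambda>i. height k f i + m i"] by auto
  show ?thesis
    unfolding iff
  proof (rule ex1I)
    show "?R h" by (rule h)
    fix h' assume "?R h'"
    then show "h' = h"
      using h placing_below_eq_if_height_eq[OF _ _ pg, of h' h] by simp
  qed
qed

lemma is_k_graph_Sigma_k: "is_k_graph k (Sigma_k k) sig_r sig_s sig_comp (sig_d k)"
  unfolding is_k_graph_def
proof (intro conjI ballI allI impI)
  show "countable (Sigma_k k)" by (rule countable_Sigma_k)
  show "is_category (Sigma_k k) sig_r sig_s sig_comp" by (rule is_category_Sigma_k)
  show "nvec k (sig_d k a)" for a by (simp add: nvec_def sig_d_def height_def)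
  show "sig_d k a = (\<lambda>i. 0)" if "sig_r a = a" for a
    using that by (auto simp: sig_r_def sig_d_def prod_eq_iff)
  show "sig_d k (sig_comp a b) = (\<lambda>i. sig_d k a i + sig_d k b i)"
    if "a \<in> Sigma_k k" "b \<in> Sigma_k k" "sig_s a = sig_r b" for a b
    using that sig_d_comp[of "fst a" "snd a" k "snd b"]
    by (cases a; cases b) (auto simp: sig_s_def sig_r_def sig_comp_def)
  fix m n l
  assume "l \<in> Sigma_k k" "sig_d k l = (\<lambda>i. m i + n i)"
  then obtain f g where l: "l = (f, g)" "(f, g) \<in> Sigma_k k" "sig_d k (f, g) = (\<lambda>i. m i + n i)"
    by (metis prod.collapse)
  have factor: "fst p \<in> Sigma_k k \<and> snd p \<in> Sigma_k k \<and> sig_s (fst p) = sig_r (snd p) \<and>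
      sig_d k (fst p) = m \<and> sig_d k (snd p) = n \<and> sig_comp (fst p) (snd p) = l \<longleftrightarrow>
    (\<exists>h. p = ((f, h), (h, g)) \<and>
      (f, h) \<in> Sigma_k k \<and> (h, g) \<in> Sigma_k k \<and> sig_d k (f, h) = m \<and> sig_d k (h, g) = n)" for p
    by (cases p) (auto simp: l(1) sig_r_def sig_s_def sig_comp_def)
  show "\<exists>!p. fst p \<in> Sigma_k k \<and> snd p \<in> Sigma_k k \<and> sig_s (fst p) = sig_r (snd p) \<and>
      sig_d k (fst p) = m \<and> sig_d k (snd p) = n \<and> sig_comp (fst p) (snd p) = l"
    unfolding factor using Sigma_k_unique_factorisation[OF l(2,3)] by blast
qed

lemma sig_d_image:
  "sig_d k ` Sigma_k k = {n. nvec k n \<and> (\<forall>i. 1 \<le> i \<and> i \<le> k \<longrightarrow> n i \<le> 1)}"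
proof (intro set_eqI iffI)
  fix n assume "n \<in> sig_d k ` Sigma_k k"
  then show "n \<in> {n. nvec k n \<and> (\<forall>i. 1 \<le> i \<and> i \<le> k \<longrightarrow> n i \<le> 1)}"
    by (auto simp: nvec_def sig_d_def height_def)
next
  fix n assume "n \<in> {n. nvec k n \<and> (\<forall>i. 1 \<le> i \<and> i \<le> k \<longrightarrow> n i \<le> 1)}"
  then have n: "nvec k n" "\<And>i. 1 \<le> i \<Longrightarrow> i \<le> k \<Longrightarrow> n i \<le> 1" by auto
  define g :: "nat \<Rightarrow> nat" where "g = (\<lambda>j. if j \<le> k then j else 0)"
  have pg: "placing k g" using placing_id by (simp add: g_def)
  \<comment> \<open>\<open>h(0) = 0\<close> and \<open>h(g) = \<one>\<^sub>k\<close>, so every admissible \<open>n\<close> is a height between them\<close>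
  have "n i \<le> height k g i" for i
  proof (cases "1 \<le> i \<and> i \<le> k")
    case True
    then have "\<exists>j\<le>k. g j = i" by (intro exI[of _ i]) (simp add: g_def)
    then show ?thesis using True n(2)[of i] by (simp add: height_def)
  next
    case False
    then have "i < 1 \<or> k < i" by linarith
    then show ?thesis using nvec_eq_0[OF n(1)] by simp
  qed
  moreover have "ple k (\<lambda>_. 0) g" by (simp add: ple_def)
  ultimately obtain h where h: "placing k h" "ple k (\<lambda>_. 0) h" "height k h = n"
    using exists_placing_between[OF placing_zero pg, of n] by (auto simp: height_zero)
  then have "(\<lambda>_. 0, h) \<in> Sigma_k k" by (simp add: mem_Sigma_k_iff placing_zero)
  moreover have "sig_d k (\<lambda>_. 0, h) = n" using h(3) by (simp add: sig_d_def height_zero)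
  ultimately show "n \<in> sig_d k ` Sigma_k k" by (metis image_eqI)
qed

theorem proposition5p4:
  fixes k :: nat
  assumes "1 \<le> k"
  shows "(\<forall>(f, g)\<in>Sigma_k k. \<forall>i. height k f i \<le> height k g i)
    \<and> is_k_graph k (Sigma_k k) sig_r sig_s sig_comp (sig_d k)
    \<and> sig_d k ` Sigma_k k = {n. nvec k n \<and> (\<forall>i. 1 \<le> i \<and> i \<le> k \<longrightarrow> n i \<le> 1)}"
  using Sigma_k_height_mono is_k_graph_Sigma_k sig_d_image by blast

end
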